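(* Let $v,w\in\mathfrak{S}_n$ with $v$ boolean, and fix a reduced word $s$ for $v$. Let $\mathcal{W}(v,w)$ be the set of all subwords of $s$ of the form $i(i+1)\cdots(i+j)$ or $(i+j)\cdots(i+1)i$ (with $j\ge0$) such that: in the first case, the permutation $[i(i+1)\cdots(i+j)]\not\le w$ while $[i(i+1)\cdots(i+j-1)]\le w$ and $[(i+1)(i+2)\cdots(i+j)]\le w$; in the second case, $[(i+j)\cdots(i+1)i]\not\le w$ while $[(i+j-1)\cdots(i+1)i]\le w$ and $[(i+j)\cdots(i+2)(i+1)]\le w$ (the empty word denotes the identity, which is $\le w$). Let $\mathcal{W}(v,w)^{\uparrow}$ be the set of maximal subwords of $s$ that contain no element of $\mathcal{W}(v,w)$ as a subword. Then (identifying subwords of $s$ with the permutations they represent) $\mathcal{W}(v,w)^{\uparrow}$ is exactly the set of maximal elements of $B(v)\cap B(w)$.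
   Context: $\sigma_i=(i,i+1)$; $[a_1\cdots a_k]$ denotes the permutation $\sigma_{a_1}\cdots\sigma_{a_k}$; $\le$ is the Bruhat order on $\mathfrak{S}_n$ and $B(w)=\{u:u\le w\}$. A permutation is boolean if its reduced words contain no repeated letters; then every subword of a reduced word for $v$ is itself a reduced word. *)

theory Defs
  imports "HOL-Combinatorics.Combinatorics" "HOL-Library.Sublist"
begin

text \<open>Permutations of S_n are bijections of {1..n} (identity outside).
  Simple transposition sigma_i = (i, i+1); a word [a_1 ... a_k] denotes
  sigma_{a_1} o ... o sigma_{a_k}.\<close>

definition sigma :: "nat \<Rightarrow> nat \<Rightarrow> nat" where
  "sigma i = Transposition.transpose i (Suc i)"

definition word_perm :: "nat list \<Rightarrow> nat \<Rightarrow> nat" where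
  "word_perm ws = foldr (\<lambda>a f. sigma a \<circ> f) ws id"

definition valid_word :: "nat \<Rightarrow> nat list \<Rightarrow> bool" where
  "valid_word n ws \<longleftrightarrow> set ws \<subseteq> {1..<n}"

definition reduced_word :: "nat \<Rightarrow> nat list \<Rightarrow> (nat \<Rightarrow> nat) \<Rightarrow> bool" where
  "reduced_word n ws v \<longleftrightarrow> valid_word n ws \<and> word_perm ws = v \<and>
     (\<forall>ws'. valid_word n ws' \<and> word_perm ws' = v \<longrightarrow> length ws \<le> length ws')"

definition boolean_perm :: "nat \<Rightarrow> (nat \<Rightarrow> nat) \<Rightarrow> bool" where
  "boolean_perm n v \<longleftrightarrow> (\<forall>ws. reduced_word n ws v \<longrightarrow> distinct ws)"

definition inv_count :: "nat \<Rightarrow> (nat \<Rightarrow> nat) \<Rightarrow> nat" where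
  "inv_count n w = card {(i, j). i \<in> {1..n} \<and> j \<in> {1..n} \<and> i < j \<and> w i > w j}"

definition bruhat_step :: "nat \<Rightarrow> ((nat \<Rightarrow> nat) \<times> (nat \<Rightarrow> nat)) set" where
  "bruhat_step n = {(x, x \<circ> Transposition.transpose a b) | x a b.
      a \<in> {1..n} \<and> b \<in> {1..n} \<and> a \<noteq> b \<and>
      inv_count n x < inv_count n (x \<circ> Transposition.transpose a b)}"

definition bruhat_le :: "nat \<Rightarrow> (nat \<Rightarrow> nat) \<Rightarrow> (nat \<Rightarrow> nat) \<Rightarrow> bool" where
  "bruhat_le n u w \<longleftrightarrow> u permutes {1..n} \<and> (u, w) \<in> (bruhat_step n)\<^sup>*"

definition bruhat_interval :: "nat \<Rightarrow> (nat \<Rightarrow> nat) \<Rightarrow> (nat \<Rightarrow> nat) set" where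
  "bruhat_interval n w = {u. bruhat_le n u w}"

definition maximal_elems :: "nat \<Rightarrow> (nat \<Rightarrow> nat) set \<Rightarrow> (nat \<Rightarrow> nat) set" where
  "maximal_elems n S = {u \<in> S. \<forall>u' \<in> S. bruhat_le n u u' \<longrightarrow> u' = u}"

definition W_set :: "nat \<Rightarrow> nat list \<Rightarrow> (nat \<Rightarrow> nat) \<Rightarrow> nat list set" where
  "W_set n s w = {u. subseq u s \<and> (\<exists>i j.
     (u = [i..<i+j+1] \<and> \<not> bruhat_le n (word_perm [i..<i+j+1]) w \<and>
        bruhat_le n (word_perm [i..<i+j]) w \<and> bruhat_le n (word_perm [i+1..<i+j+1]) w)
   \<or> (u = rev [i..<i+j+1] \<and> \<not> bruhat_le n (word_perm (rev [i..<i+j+1])) w \<and>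
        bruhat_le n (word_perm (rev [i..<i+j])) w \<and> bruhat_le n (word_perm (rev [i+1..<i+j+1])) w))}"

definition W_up :: "nat \<Rightarrow> nat list \<Rightarrow> (nat \<Rightarrow> nat) \<Rightarrow> nat list set" where
  "W_up n s w = (let A = {u. subseq u s \<and> (\<forall>x \<in> W_set n s w. \<not> subseq x u)} in
     {u \<in> A. \<forall>u' \<in> A. subseq u u' \<longrightarrow> u' = u})"

end

theory Submission
  imports Defs
begin

text \<open>Since the reduced word \<open>s\<close> of the boolean permutation \<open>v\<close> has distinct letters,
  strong exchange shows that \<open>B(v)\<close> consists of the permutations of the subwords of \<open>s\<close>.
  For such a subword \<open>x\<close> the rank matrix \<open>r_x(k,l) = #{i \<le> k. l \<le> x i}\<close> equals that
  of the identity plus one exactly where \<open>x\<close> contains the run \<open>(l-1)(l-2)\<dots>k\<close>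
  (if \<open>k < l\<close>) or \<open>(l-1)l\<dots>k\<close> (otherwise). By the tableau criterion
  (\<open>u \<le> w\<close> iff \<open>r_u \<le> r_w\<close> entrywise) the Bruhat order on \<open>B(v)\<close> is therefore the
  subword order, and \<open>x \<le> w\<close> fails iff \<open>x\<close> contains a run whose permutation is not
  below \<open>w\<close>; shrinking such a run at either end as long as possible yields an element of
  \<open>W(v,w)\<close>. So \<open>B(v) \<inter> B(w)\<close> is order isomorphic to the subwords of \<open>s\<close> avoiding
  \<open>W(v,w)\<close>, and the maximal elements correspond.\<close>

lemma sigma_apply: "sigma c x = (if x = c then Suc c else if x = Suc c then c else x)"
  by (simp add: sigma_def transpose_def)

lemma word_perm_Nil [simp]: "word_perm [] = id"
  by (simp add: word_perm_def)

lemma word_perm_Cons [simp]: "word_perm (c # ws) = sigma c \<circ> word_perm ws"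
  by (simp add: word_perm_def)

lemma bij_word_perm: "bij (word_perm ws)"
proof (induction ws)
  case Nil
  show ?case by (simp only: word_perm_Nil bij_id)
next
  case (Cons c ws)
  then show ?case by (simp only: word_perm_Cons) (rule bij_comp, assumption, simp add: sigma_def)
qed

lemma inj_word_perm: "inj (word_perm ws)"
  using bij_word_perm bij_is_inj by blast

lemma word_perm_permutes:
  assumes "set ws \<subseteq> {1..<n}"
  shows "word_perm ws permutes {1..n}"
  using assms
proof (induction ws)
  case Nil
  show ?case by (simp only: word_perm_Nil permutes_id)
next
  case (Cons c ws)
  have "sigma c permutes {1..n}"
    unfolding sigma_def using Cons.prems by (intro permutes_swap_id) auto
  moreover have "word_perm ws permutes {1..n}" using Cons by simp
  ultimately show ?case by (simp only: word_perm_Cons permutes_compose)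
qed

lemma set_subseq: "subseq xs ys \<Longrightarrow> set xs \<subseteq> set ys"
  by (auto elim: list_emb_set)

lemma not_subseq_if_missing: "c \<in> set xs \<Longrightarrow> c \<notin> set ys \<Longrightarrow> \<not> subseq xs ys"
  using set_subseq by blast

lemma distinct_subseq: "subseq x s \<Longrightarrow> distinct s \<Longrightarrow> distinct x"
  by (induction rule: list_emb.induct) (auto dest: set_subseq)

lemma subseq_eq_filter:
  assumes "distinct s" "subseq x s"
  shows "x = filter (\<lambda>c. c \<in> set x) s"
proof (rule subseq_same_length)
  have "subseq (filter (\<lambda>c. c \<in> set x) x) (filter (\<lambda>c. c \<in> set x) s)"
    using assms(2) by (rule subseq_filter)
  then show "subseq x (filter (\<lambda>c. c \<in> set x) s)" by simp
  have "set (filter (\<lambda>c. c \<in> set x) s) = set x"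
    using set_subseq[OF assms(2)] by auto
  then show "length x = length (filter (\<lambda>c. c \<in> set x) s)"
    using assms distinct_subseq by (metis distinct_card distinct_filter)
qed

lemma subseq_iff_set_subset:
  assumes "distinct s" "subseq x s" "subseq y s"
  shows "subseq x y \<longleftrightarrow> set x \<subseteq> set y"
proof
  assume "set x \<subseteq> set y"
  then have "filter (\<lambda>c. c \<in> set x) y = filter (\<lambda>c. c \<in> set x) s"
    by (subst subseq_eq_filter[OF assms(1,3)]) (auto intro: filter_cong)
  then have "x = filter (\<lambda>c. c \<in> set x) y"
    using subseq_eq_filter[OF assms(1,2)] by simp
  then show "subseq x y" by (metis subseq_filter_left)
qed (rule set_subseq)

lemma image_maximal_elements:
  assumes "B = f ` A" "inj_on f A"
    and "\<And>x y. x \<in> A \<Longrightarrow> y \<in> A \<Longrightarrow> le_B (f x) (f y) \<longleftrightarrow> le_A x y"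
  shows "f ` {x \<in> A. \<forall>y \<in> A. le_A x y \<longrightarrow> y = x} = {p \<in> B. \<forall>q \<in> B. le_B p q \<longrightarrow> q = p}"
  using assms by (auto simp: inj_on_eq_iff)

section \<open>Inversions and Bruhat steps\<close>

definition inversions :: "nat \<Rightarrow> (nat \<Rightarrow> nat) \<Rightarrow> (nat \<times> nat) set" where
  "inversions n z = {(i, j). i \<in> {1..n} \<and> j \<in> {1..n} \<and> i < j \<and> z i > z j}"

lemma inv_count_eq_card_inversions: "inv_count n z = card (inversions n z)"
  by (simp add: inv_count_def inversions_def)

lemma finite_inversions: "finite (inversions n z)"
  by (rule finite_subset[of _ "{1..n} \<times> {1..n}"]) (auto simp: inversions_def)

definition swap_pair :: "nat \<Rightarrow> nat \<Rightarrow> nat \<times> nat \<Rightarrow> nat \<times> nat" where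
  "swap_pair a b = (\<lambda>(i, j). if (a < i \<and> i < b) \<or> (a < j \<and> j < b) then (i, j)
     else (Transposition.transpose a b i, Transposition.transpose a b j))"

lemma swap_pair_swap_pair:
  assumes "a < b"
  shows "swap_pair a b (swap_pair a b p) = p"
proof -
  have "(a < Transposition.transpose a b x \<and> Transposition.transpose a b x < b) \<longleftrightarrow> (a < x \<and> x < b)"
    for x using assms by (auto simp: transpose_def)
  then show ?thesis by (cases p) (auto simp: swap_pair_def)
qed

lemma swap_pair_inversion:
  assumes ab: "a < b" "a \<in> {1..n}" "b \<in> {1..n}" and zab: "z a < z b"
    and ij: "(i, j) \<in> inversions n z"
  shows "swap_pair a b (i, j) \<in> inversions n (z \<circ> Transposition.transpose a b) - {(a, b)}"
proof -
  let ?t = "Transposition.transpose a b"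
  from ij have i: "i \<in> {1..n}" and j: "j \<in> {1..n}" and lt: "i < j" and zz: "z i > z j"
    by (auto simp: inversions_def)
  show ?thesis
  proof (cases "(a < i \<and> i < b) \<or> (a < j \<and> j < b)")
    case True
    then have "z (?t i) > z (?t j)"
      using lt zz zab ab by (auto simp: transpose_def)
    then show ?thesis using i j lt True by (auto simp: inversions_def swap_pair_def)
  next
    case False
    have "(i, j) \<noteq> (a, b)" using zz zab by auto
    then have "?t i < ?t j" using False lt ab by (auto simp: transpose_def)
    moreover have "?t i \<in> {1..n}" "?t j \<in> {1..n}" using i j ab by (auto simp: transpose_def)
    moreover have "(?t i, ?t j) \<noteq> (a, b)" using lt ab by (auto simp: transpose_def split: if_splits)
    ultimately show ?thesis using zz False by (auto simp: inversions_def swap_pair_def)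
  qed
qed

lemma inv_count_less_swap:
  assumes ab: "a < b" "a \<in> {1..n}" "b \<in> {1..n}" and zab: "z a < z b"
  shows "inv_count n z < inv_count n (z \<circ> Transposition.transpose a b)"
proof -
  let ?z' = "z \<circ> Transposition.transpose a b"
  have "inj_on (swap_pair a b) (inversions n z)"
    using swap_pair_swap_pair[OF ab(1)] by (metis inj_onI)
  then have "card (inversions n z) = card (swap_pair a b ` inversions n z)"
    by (simp add: card_image)
  also have "\<dots> \<le> card (inversions n ?z' - {(a, b)})"
  proof (intro card_mono image_subsetI)
    fix p assume "p \<in> inversions n z"
    then show "swap_pair a b p \<in> inversions n ?z' - {(a, b)}"
      using swap_pair_inversion[OF ab zab, of "fst p" "snd p"] by simp
  qed (simp add: finite_inversions)
  also have "\<dots> < card (inversions n ?z')"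
    using ab zab by (intro card_Diff1_less finite_inversions) (auto simp: inversions_def)
  finally show ?thesis by (simp add: inv_count_eq_card_inversions)
qed

lemma inv_count_less_swap_imp_less:
  assumes ab: "a < b" "a \<in> {1..n}" "b \<in> {1..n}"
    and lt: "inv_count n z < inv_count n (z \<circ> Transposition.transpose a b)"
  shows "z a < z b"
proof (rule ccontr)
  assume "\<not> z a < z b"
  then consider "z a = z b" | "z b < z a" by linarith
  then show False
  proof cases
    case 1
    then have "z \<circ> Transposition.transpose a b = z"
      by (auto simp: transpose_def)
    then show False using lt by simp
  next
    case 2
    let ?z = "z \<circ> Transposition.transpose a b"
    have "inv_count n ?z < inv_count n (?z \<circ> Transposition.transpose a b)"
      using 2 ab by (intro inv_count_less_swap) auto
    then show False using lt by (simp add: comp_assoc)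
  qed
qed

lemma bruhat_stepE:
  assumes "(x, y) \<in> bruhat_step n"
  obtains a b where "a < b" "a \<in> {1..n}" "b \<in> {1..n}" "x a < x b"
    "y = x \<circ> Transposition.transpose a b"
proof -
  obtain a b where y: "y = x \<circ> Transposition.transpose a b" and ab: "a \<in> {1..n}" "b \<in> {1..n}" "a \<noteq> b"
    and lt: "inv_count n x < inv_count n y"
    using assms by (auto simp: bruhat_step_def)
  show ?thesis
  proof (cases "a < b")
    case True
    then show ?thesis using that ab y inv_count_less_swap_imp_less lt by blast
  next
    case False
    then have "b < a" using ab by simp
    moreover have "y = x \<circ> Transposition.transpose b a" using y transpose_commute by metis
    ultimately show ?thesis using that ab inv_count_less_swap_imp_less lt by blast
  qed
qed

lemma bruhat_le_refl: "u permutes {1..n} \<Longrightarrow> bruhat_le n u u"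
  unfolding bruhat_le_def by simp

lemma bruhat_le_trans: "bruhat_le n x y \<Longrightarrow> bruhat_le n y z \<Longrightarrow> bruhat_le n x z"
  unfolding bruhat_le_def by auto

section \<open>The tableau criterion for the Bruhat order\<close>

definition rank_matrix :: "(nat \<Rightarrow> nat) \<Rightarrow> nat \<Rightarrow> nat \<Rightarrow> nat" where
  "rank_matrix p k l = card {i \<in> {1..k}. l \<le> p i}"

lemma rank_matrix_sum: "rank_matrix p k l = (\<Sum>i=1..k. if l \<le> p i then 1 else 0)"
  by (simp add: rank_matrix_def sum.If_cases Int_def conj_commute)

lemma rank_matrix_0 [simp]: "rank_matrix p 0 l = 0"
  by (simp add: rank_matrix_def)

lemma rank_matrix_Suc: "rank_matrix p (Suc k) l = rank_matrix p k l + (if l \<le> p (Suc k) then 1 else 0)"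
  by (simp add: rank_matrix_sum)

lemma rank_matrix_split:
  assumes "a \<le> k"
  shows "rank_matrix p k l = rank_matrix p a l + (\<Sum>i=Suc a..k. if l \<le> p i then 1 else 0)"
  using assms by (induction k) (auto simp: rank_matrix_Suc le_Suc_eq)

lemma rank_matrix_cong:
  assumes "\<And>i. i \<le> k \<Longrightarrow> p i = q i"
  shows "rank_matrix p k l = rank_matrix q k l"
  unfolding rank_matrix_def using assms by (intro arg_cong[where f = card]) auto

lemma rank_matrix_swap:
  assumes ab: "a < b" "1 \<le> a" and xab: "x a < x b"
  shows "rank_matrix (x \<circ> Transposition.transpose a b) k l
       = rank_matrix x k l + (if a \<le> k \<and> k < b \<and> x a < l \<and> l \<le> x b then 1 else 0)"
proof -
  define t where "t = Transposition.transpose a b"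
  define g where "g = (\<lambda>i. if l \<le> x i then 1 else (0::nat))"
  have rkx: "rank_matrix x k l = sum g {1..k}" by (simp add: rank_matrix_sum g_def)
  have rkt: "rank_matrix (x \<circ> t) k l = sum (\<lambda>i. g (t i)) {1..k}" by (simp add: rank_matrix_sum g_def)
  consider "k < a" | "b \<le> k" | "a \<le> k \<and> k < b" by linarith
  then show ?thesis
  proof cases
    case 1
    have "sum (\<lambda>i. g (t i)) {1..k} = sum g {1..k}"
      using 1 ab by (intro sum.cong) (auto simp: t_def)
    then show ?thesis using 1 rkx rkt by (simp add: t_def)
  next
    case 2
    have "t permutes {1..k}" unfolding t_def using 2 ab by (intro permutes_swap_id) auto
    then have "sum (\<lambda>i. g (t i)) {1..k} = sum g {1..k}"
      by (intro sum.reindex_bij_betw permutes_imp_bij)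
    then show ?thesis using 2 ab rkx rkt by (simp add: t_def)
  next
    case 3
    have ain: "a \<in> {1..k}" using 3 ab by auto
    have rest: "sum (\<lambda>i. g (t i)) ({1..k} - {a}) = sum g ({1..k} - {a})"
      using 3 ab by (intro sum.cong) (auto simp: t_def)
    have "sum (\<lambda>i. g (t i)) {1..k} = g b + sum (\<lambda>i. g (t i)) ({1..k} - {a})"
      using ain by (subst sum.remove[of _ a]) (auto simp: t_def)
    moreover have "sum g {1..k} = g a + sum g ({1..k} - {a})"
      using ain by (subst sum.remove[of _ a]) auto
    moreover have "g b = g a + (if x a < l \<and> l \<le> x b then 1 else 0)"
      using xab by (auto simp: g_def)
    ultimately show ?thesis using 3 rkx rkt rest by (simp add: t_def)
  qed
qed

lemma bruhat_le_imp_rank_matrix_le: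
  assumes "bruhat_le n u w"
  shows "rank_matrix u k l \<le> rank_matrix w k l"
proof -
  from assms have "(u, w) \<in> (bruhat_step n)\<^sup>*" by (simp add: bruhat_le_def)
  then show ?thesis
  proof (induction rule: rtrancl_induct)
    case base
    then show ?case by simp
  next
    case (step y z)
    then obtain a b where "a < b" "a \<in> {1..n}" "y a < y b" "z = y \<circ> Transposition.transpose a b"
      by (auto elim: bruhat_stepE)
    then have "rank_matrix y k l \<le> rank_matrix z k l"
      by (simp add: rank_matrix_swap)
    with step.IH show ?case by simp
  qed
qed

text \<open>Compare column \<open>l\<close> with column \<open>Suc (w a)\<close>, where \<open>u\<close> is below \<open>w\<close> by assumption:
  rows \<open>a+1..k\<close> of \<open>u\<close> count the same in both columns, those of \<open>w\<close> count at least as much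
  in column \<open>l\<close>, and row \<open>a\<close> counts in column \<open>l\<close> for \<open>w\<close> but not for \<open>u\<close>.\<close>

lemma rank_matrix_slack:
  assumes agree: "\<And>i. i < a \<Longrightarrow> u i = w i" and a: "1 \<le> a" "a \<le> k"
    and uwa: "u a < w a" and l: "u a < l" "l \<le> w a"
    and gap: "\<And>i. a < i \<Longrightarrow> i \<le> k \<Longrightarrow> \<not> (u a < u i \<and> u i \<le> w a)"
    and le: "rank_matrix u k (Suc (w a)) \<le> rank_matrix w k (Suc (w a))"
  shows "rank_matrix u k l < rank_matrix w k l"
proof -
  define T where "T = (\<lambda>(p :: nat \<Rightarrow> nat) m. \<Sum>i=Suc a..k. if m \<le> p i then 1 else (0::nat))"
  have split: "rank_matrix p k m = rank_matrix p (a - 1) m + (if m \<le> p a then 1 else 0) + T p m"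
    for p m
    using rank_matrix_split[OF a(2), of p m] rank_matrix_Suc[of p "a - 1" m] a(1)
    by (simp add: T_def)
  have head: "rank_matrix u (a - 1) m = rank_matrix w (a - 1) m" for m
    using agree a(1) by (intro rank_matrix_cong) auto
  have u_l: "rank_matrix u k l = rank_matrix w (a - 1) l + T u l"
    using split[of u l] head l by simp
  have w_l: "rank_matrix w k l = rank_matrix w (a - 1) l + 1 + T w l"
    using split[of w l] l by simp
  have "T u (Suc (w a)) \<le> T w (Suc (w a))"
    using le split[of u "Suc (w a)"] split[of w "Suc (w a)"] head[of "Suc (w a)"] uwa by simp
  moreover have "T u l = T u (Suc (w a))"
    unfolding T_def
  proof (intro sum.cong refl)
    fix i assume "i \<in> {Suc a..k}"
    then have "\<not> (u a < u i \<and> u i \<le> w a)" using gap by simp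
    then show "(if l \<le> u i then 1 else 0) = (if Suc (w a) \<le> u i then 1 else (0::nat))"
      using l by auto
  qed
  moreover have "T w (Suc (w a)) \<le> T w l"
    unfolding T_def using l by (intro sum_mono) auto
  ultimately show ?thesis
    using u_l w_l by linarith
qed

lemma first_difference_below:
  assumes u: "u permutes {1..n}" and w: "w permutes {1..n}" and "u \<noteq> w"
    and le: "\<And>k l. rank_matrix u k l \<le> rank_matrix w k l"
  obtains a where "a \<in> {1..n}" "\<forall>i<a. u i = w i" "u a < w a"
proof
  define a where "a = (LEAST i. u i \<noteq> w i)"
  have "\<exists>i. u i \<noteq> w i" using \<open>u \<noteq> w\<close> by auto
  then have ua: "u a \<noteq> w a"
    unfolding a_def by (rule LeastI_ex)
  show agree: "\<forall>i<a. u i = w i"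
    using not_less_Least unfolding a_def by blast
  show a1: "a \<in> {1..n}"
  proof (rule ccontr)
    assume "a \<notin> {1..n}"
    then have "u a = w a" by (simp add: permutes_not_in[OF u] permutes_not_in[OF w])
    with ua show False ..
  qed
  show "u a < w a"
  proof (rule ccontr)
    assume "\<not> u a < w a"
    then have "w a < u a" using ua by simp
    have "rank_matrix p a l = rank_matrix p (a - 1) l + (if l \<le> p a then 1 else 0)" for p l
      using rank_matrix_Suc[of p "a - 1" l] a1 by simp
    moreover have "rank_matrix u (a - 1) l = rank_matrix w (a - 1) l" for l
      using agree a1 by (intro rank_matrix_cong) auto
    ultimately have "rank_matrix u a (u a) > rank_matrix w a (u a)"
      using \<open>w a < u a\<close> by simp
    with le show False by (meson not_le)
  qed
qed

lemma exists_later_preimage: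
  fixes u w :: "nat \<Rightarrow> nat"
  assumes u: "u permutes {1..n}" and w: "w permutes {1..n}" and a: "a \<in> {1..n}"
    and agree: "\<forall>i<a. u i = w i" and "u a \<noteq> w a"
  obtains j where "a < j" "j \<in> {1..n}" "u j = w a"
proof -
  from permutes_surj[OF u] obtain j where j: "u j = w a"
    by (metis surjD)
  have "w a \<in> {1..n}" using a by (simp only: permutes_in_image[OF w])
  then have "u j \<in> {1..n}" using j by simp
  then have "j \<in> {1..n}" by (simp only: permutes_in_image[OF u])
  moreover have "a < j"
  proof (rule ccontr)
    assume "\<not> a < j"
    moreover have "j \<noteq> a" using j \<open>u a \<noteq> w a\<close> by auto
    ultimately have "j < a" by simp
    then have "w j = w a" using agree j by simp
    with permutes_inj[OF w] have "j = a" by (rule injD)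
    with \<open>j < a\<close> show False by simp
  qed
  ultimately show ?thesis using that j by blast
qed

lemma exists_swap_below:
  assumes u: "u permutes {1..n}" and w: "w permutes {1..n}" and "u \<noteq> w"
    and le: "\<And>k l. rank_matrix u k l \<le> rank_matrix w k l"
  obtains a b where "a < b" "a \<in> {1..n}" "b \<in> {1..n}" "u a < u b"
    "\<And>k l. rank_matrix (u \<circ> Transposition.transpose a b) k l \<le> rank_matrix w k l"
proof -
  obtain a where a1: "a \<in> {1..n}" and agree: "\<forall>i<a. u i = w i" and uwa: "u a < w a"
    by (rule first_difference_below[OF assms])
  obtain j0 where "a < j0" "j0 \<in> {1..n}" "u j0 = w a"
    by (rule exists_later_preimage[OF u w a1 agree]) (use uwa in simp)
  define P where "P = (\<lambda>j. a < j \<and> u a < u j \<and> u j \<le> w a)"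
  have "P j0" using \<open>a < j0\<close> \<open>u j0 = w a\<close> uwa by (simp add: P_def)
  define b where "b = (LEAST j. P j)"
  have "P b" "b \<le> j0"
    unfolding b_def using \<open>P j0\<close> by (auto intro: LeastI Least_le)
  then have ab: "a < b" and uab: "u a < u b" and ubw: "u b \<le> w a" and b1: "b \<in> {1..n}"
    using \<open>j0 \<in> {1..n}\<close> a1 by (auto simp: P_def)
  have gap: "\<not> (u a < u i \<and> u i \<le> w a)" if "a < i" "i < b" for i
  proof
    assume "u a < u i \<and> u i \<le> w a"
    then have "P i" using \<open>a < i\<close> by (simp add: P_def)
    then have "b \<le> i" unfolding b_def by (rule Least_le)
    with \<open>i < b\<close> show False by simp
  qed
  show ?thesis
  proof (rule that[OF ab a1 b1 uab])
    fix k l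
    show "rank_matrix (u \<circ> Transposition.transpose a b) k l \<le> rank_matrix w k l"
    proof (cases "a \<le> k \<and> k < b \<and> u a < l \<and> l \<le> u b")
      case True
      have gap_k: "\<not> (u a < u i \<and> u i \<le> w a)" if "a < i" "i \<le> k" for i
        using gap that True by simp
      have "rank_matrix u k l < rank_matrix w k l"
        by (rule rank_matrix_slack[OF agree[rule_format] _ _ uwa _ _ gap_k le]) (use True ubw a1 in auto)
      moreover have "rank_matrix (u \<circ> Transposition.transpose a b) k l = rank_matrix u k l + 1"
        using rank_matrix_swap[OF ab _ uab, of k l] a1 True by simp
      ultimately show ?thesis by linarith
    next
      case False
      then have "rank_matrix (u \<circ> Transposition.transpose a b) k l = rank_matrix u k l"
        using rank_matrix_swap[OF ab _ uab, of k l] a1 by simp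
      then show ?thesis using le[of k l] by simp
    qed
  qed
qed

definition rank_deficit :: "nat \<Rightarrow> (nat \<Rightarrow> nat) \<Rightarrow> (nat \<Rightarrow> nat) \<Rightarrow> nat" where
  "rank_deficit n w u = (\<Sum>(k, l)\<in>{1..n} \<times> {1..n}. rank_matrix w k l - rank_matrix u k l)"

lemma rank_deficit_less:
  assumes mono: "\<And>k l. rank_matrix u k l \<le> rank_matrix u' k l"
    and below: "\<And>k l. rank_matrix u' k l \<le> rank_matrix w k l"
    and kl: "k \<in> {1..n}" "l \<in> {1..n}" and strict: "rank_matrix u k l < rank_matrix u' k l"
  shows "rank_deficit n w u' < rank_deficit n w u"
  unfolding rank_deficit_def
proof (rule sum_strict_mono_ex1)
  show "\<forall>p\<in>{1..n} \<times> {1..n}. (case p of (k, l) \<Rightarrow> rank_matrix w k l - rank_matrix u' k l)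
      \<le> (case p of (k, l) \<Rightarrow> rank_matrix w k l - rank_matrix u k l)"
    using mono by (auto intro: diff_le_mono2)
  have "rank_matrix w k l - rank_matrix u' k l < rank_matrix w k l - rank_matrix u k l"
    using strict below[of k l] by (intro diff_less_mono2) auto
  then show "\<exists>p\<in>{1..n} \<times> {1..n}. (case p of (k, l) \<Rightarrow> rank_matrix w k l - rank_matrix u' k l)
      < (case p of (k, l) \<Rightarrow> rank_matrix w k l - rank_matrix u k l)"
    using kl by force
qed simp

lemma rank_matrix_le_imp_bruhat_step_rtrancl:
  assumes w: "w permutes {1..n}"
  shows "u permutes {1..n} \<Longrightarrow> (\<And>k l. rank_matrix u k l \<le> rank_matrix w k l)
    \<Longrightarrow> (u, w) \<in> (bruhat_step n)\<^sup>*"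
proof (induction "rank_deficit n w u" arbitrary: u rule: less_induct)
  case less
  show ?case
  proof (cases "u = w")
    case True
    then show ?thesis by simp
  next
    case False
    obtain a b where ab: "a < b" "a \<in> {1..n}" "b \<in> {1..n}" "u a < u b"
      and below: "\<And>k l. rank_matrix (u \<circ> Transposition.transpose a b) k l \<le> rank_matrix w k l"
      using exists_swap_below[OF less.prems(1) w False less.prems(2)] by blast
    define u' where "u' = u \<circ> Transposition.transpose a b"
    have swap: "rank_matrix u' k l
        = rank_matrix u k l + (if a \<le> k \<and> k < b \<and> u a < l \<and> l \<le> u b then 1 else 0)" for k l
      unfolding u'_def using ab by (intro rank_matrix_swap) auto
    have "inv_count n u < inv_count n u'"
      unfolding u'_def using ab by (rule inv_count_less_swap)
    then have "(u, u') \<in> bruhat_step n"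
      unfolding bruhat_step_def u'_def using ab less_imp_neq by blast
    moreover have "(u', w) \<in> (bruhat_step n)\<^sup>*"
    proof (rule less.hyps)
      show "u' permutes {1..n}"
        unfolding u'_def using ab less.prems(1) by (intro permutes_compose permutes_swap_id) auto
      show "rank_matrix u' k l \<le> rank_matrix w k l" for k l
        using below unfolding u'_def .
      have "u b \<in> {1..n}" using ab(3) by (simp only: permutes_in_image[OF less.prems(1)])
      then show "rank_deficit n w u' < rank_deficit n w u"
        using ab swap \<open>\<And>k l. rank_matrix u' k l \<le> rank_matrix w k l\<close>
        by (intro rank_deficit_less[where k = a and l = "Suc (u a)"]) auto
    qed
    ultimately show ?thesis by (rule converse_rtrancl_into_rtrancl)
  qed
qed

theorem bruhat_le_iff_rank_matrix_le:
  assumes "u permutes {1..n}" "w permutes {1..n}"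
  shows "bruhat_le n u w \<longleftrightarrow> (\<forall>k l. rank_matrix u k l \<le> rank_matrix w k l)"
  using assms bruhat_le_imp_rank_matrix_le rank_matrix_le_imp_bruhat_step_rtrancl
  unfolding bruhat_le_def by blast

lemma rank_matrix_id: "rank_matrix id k l = k - (l - 1)"
  by (induction k) (auto simp: rank_matrix_Suc)

lemma rank_matrix_id_le:
  assumes w: "w permutes {1..n}"
  shows "rank_matrix id k l \<le> rank_matrix w k l"
proof -
  define A where "A = {i \<in> {1..k}. w i < l}"
  have "1 \<le> w i" if "1 \<le> i" for i
    using that permutes_in_image[OF w, of i] permutes_not_in[OF w, of i] by (cases "i \<le> n") auto
  then have "w ` A \<subseteq> {1..<l}"
    by (auto simp: A_def)
  then have "card A \<le> card {1..<l}"
    by (intro card_inj_on_le[OF inj_on_subset[OF permutes_inj[OF w]]]) auto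
  moreover have "card A + rank_matrix w k l = card (A \<union> {i \<in> {1..k}. l \<le> w i})"
    unfolding rank_matrix_def by (rule card_Un_disjoint[symmetric]) (auto simp: A_def)
  moreover have "A \<union> {i \<in> {1..k}. l \<le> w i} = {1..k}"
    by (auto simp: A_def)
  ultimately show ?thesis by (simp add: rank_matrix_id)
qed

lemma id_bruhat_le: "w permutes {1..n} \<Longrightarrow> bruhat_le n id w"
  using bruhat_le_iff_rank_matrix_le[OF permutes_id] rank_matrix_id_le by blast

section \<open>Rank matrices of words with distinct letters\<close>

text \<open>In the notation of \<open>W(v,w)\<close>: \<open>run i (i+j+1)\<close> is the word \<open>(i+j)\<dots>(i+1)i\<close>
  and \<open>run (i+j) (i+1)\<close> the word \<open>i(i+1)\<dots>(i+j)\<close>.\<close>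

definition run :: "nat \<Rightarrow> nat \<Rightarrow> nat list" where
  "run k l = (if k < l then rev [k..<l] else [l - 1..<Suc k])"

lemma run_eq_Cons: "\<exists>t. run k l = (l - 1) # t"
proof (cases "k < l")
  case True
  then have "[k..<l] = [k..<l - 1] @ [l - 1]"
    using upt_Suc_append[of k "l - 1"] by simp
  then show ?thesis using True by (simp add: run_def)
next
  case False
  then show ?thesis by (simp add: run_def upt_conv_Cons del: upt_Suc)
qed

lemma run_Suc:
  "run k (Suc c) = c # (if k < c then run k c else if k = c then [] else run k (Suc (Suc c)))"
proof -
  consider "k < c" | "k = c" | "c < k" by linarith
  then show ?thesis
  proof cases
    case 1
    then show ?thesis using upt_Suc_append[of k c] by (simp add: run_def)
  next
    case 3
    then show ?thesis by (simp add: run_def upt_conv_Cons del: upt_Suc)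
  qed (simp add: run_def)
qed

lemma set_run: "set (run k l) = (if k < l then {k..<l} else {l - 1..k})"
  by (auto simp: run_def)

lemma rank_matrix_sigma_other: "l \<noteq> Suc c \<Longrightarrow> rank_matrix (sigma c \<circ> p) k l = rank_matrix p k l"
  unfolding rank_matrix_def by (auto simp: sigma_apply intro!: arg_cong[where f = card])

lemma rank_matrix_sigma_Suc:
  "rank_matrix (sigma c \<circ> p) k (Suc c) + rank_matrix p k (Suc c)
    = rank_matrix p k (Suc (Suc c)) + rank_matrix p k c"
proof -
  have "(if Suc c \<le> sigma c v then 1 else 0) + (if Suc c \<le> v then 1 else 0)
      = (if Suc (Suc c) \<le> v then 1 else 0) + (if c \<le> v then 1 else (0::nat))" for v
    by (auto simp: sigma_apply)
  then show ?thesis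
    unfolding rank_matrix_sum comp_def by (simp only: sum.distrib[symmetric])
qed

lemma rank_matrix_word_perm_Cons_Suc:
  assumes c: "c \<notin> set y" "1 \<le> c"
    and rank_y: "\<And>k l. rank_matrix (word_perm y) k l
      = k - (l - 1) + (if subseq (run k l) y then 1 else 0)"
  shows "rank_matrix (word_perm (c # y)) k (Suc c)
    = k - c + (if subseq (run k (Suc c)) (c # y) then 1 else 0)"
proof -
  have sum: "rank_matrix (word_perm (c # y)) k (Suc c) + rank_matrix (word_perm y) k (Suc c)
      = rank_matrix (word_perm y) k (Suc (Suc c)) + rank_matrix (word_perm y) k c"
    by (simp only: word_perm_Cons rank_matrix_sigma_Suc)
  have "\<not> subseq (run k (Suc c)) y"
    using c by (intro not_subseq_if_missing[of c]) (auto simp: run_Suc[of k c])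
  then have mid: "rank_matrix (word_perm y) k (Suc c) = k - c"
    using rank_y[of k "Suc c"] by simp
  have "\<not> subseq (run k (Suc (Suc c))) y" if "k \<le> c"
    using c that by (intro not_subseq_if_missing[of c]) (auto simp: set_run)
  moreover have "\<not> subseq (run k c) y" if "c \<le> k"
    using c that by (intro not_subseq_if_missing[of c]) (auto simp: set_run)
  ultimately show ?thesis
    using sum mid rank_y[of k c] rank_y[of k "Suc (Suc c)"] c(2) run_Suc[of k c]
    by (cases k c rule: linorder_cases) (simp_all del: word_perm_Cons)
qed

lemma rank_matrix_word_perm:
  assumes "distinct y" "0 \<notin> set y"
  shows "rank_matrix (word_perm y) k l = k - (l - 1) + (if subseq (run k l) y then 1 else 0)"
  using assms
proof (induction y arbitrary: k l)
  case Nil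
  obtain t where "run k l = (l - 1) # t" using run_eq_Cons by blast
  then show ?case by (simp only: word_perm_Nil rank_matrix_id) simp
next
  case (Cons c y)
  have c: "c \<notin> set y" "1 \<le> c" using Cons.prems by auto
  have IH: "rank_matrix (word_perm y) k l = k - (l - 1) + (if subseq (run k l) y then 1 else 0)"
    for k l using Cons by simp
  show ?case
  proof (cases "l = Suc c")
    case True
    then show ?thesis using rank_matrix_word_perm_Cons_Suc[OF c IH] by (simp del: word_perm_Cons)
  next
    case False
    obtain t where "run k l = (l - 1) # t" using run_eq_Cons by blast
    moreover have "l - 1 \<noteq> c" using False c by auto
    moreover have "rank_matrix (word_perm (c # y)) k l = rank_matrix (word_perm y) k l"
      by (simp only: word_perm_Cons rank_matrix_sigma_other[OF False])
    ultimately show ?thesis using IH[of k l] by (simp del: word_perm_Cons)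
  qed
qed

lemma rank_matrix_subword:
  assumes "distinct s" "set s \<subseteq> {1..<n}" "subseq x s"
  shows "rank_matrix (word_perm x) k l = k - (l - 1) + (if subseq (run k l) x then 1 else 0)"
proof -
  have "set x \<subseteq> {1..<n}" using set_subseq[OF assms(3)] assms(2) by blast
  then show ?thesis by (intro rank_matrix_word_perm distinct_subseq[OF assms(3,1)]) auto
qed

lemma subword_permutes:
  assumes "set s \<subseteq> {1..<n}" "subseq x s"
  shows "word_perm x permutes {1..n}"
  using assms set_subseq by (intro word_perm_permutes) blast

lemma bruhat_le_subword_iff:
  assumes s: "distinct s" "set s \<subseteq> {1..<n}" and x: "subseq x s" and y: "subseq y s"
  shows "bruhat_le n (word_perm x) (word_perm y) \<longleftrightarrow> subseq x y"
proof
  assume "bruhat_le n (word_perm x) (word_perm y)"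
  then have le: "rank_matrix (word_perm x) k l \<le> rank_matrix (word_perm y) k l" for k l
    by (rule bruhat_le_imp_rank_matrix_le)
  have "c \<in> set y" if "c \<in> set x" for c
  proof -
    have "run c (Suc c) = [c]" by (simp add: run_def)
    then show ?thesis
      using le[of c "Suc c"] that rank_matrix_subword[OF s x] rank_matrix_subword[OF s y]
      by (auto simp: subseq_singleton_left split: if_splits)
  qed
  then show "subseq x y" using subseq_iff_set_subset[OF s(1) x y] by blast
next
  assume "subseq x y"
  then have "rank_matrix (word_perm x) k l \<le> rank_matrix (word_perm y) k l" for k l
    using rank_matrix_subword[OF s x] rank_matrix_subword[OF s y] by (auto intro: subseq_order.trans)
  then show "bruhat_le n (word_perm x) (word_perm y)"
    using bruhat_le_iff_rank_matrix_le subword_permutes s x y by blast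
qed

section \<open>Strong exchange and the lower interval of a boolean permutation\<close>

lemma sigma_flips_only_adjacent:
  assumes "p < q" "sigma c p > sigma c q"
  shows "p = c \<and> q = Suc c"
  using assms by (auto simp: sigma_apply split: if_splits)

lemma sigma_comp_transpose_cancel:
  assumes "inj p" "p a = c" "p b = Suc c"
  shows "sigma c \<circ> p \<circ> Transposition.transpose a b = p"
proof
  fix i
  show "(sigma c \<circ> p \<circ> Transposition.transpose a b) i = p i"
  proof (cases "i = a \<or> i = b")
    case True
    then show ?thesis using assms(2,3) by (auto simp: sigma_apply)
  next
    case False
    then have "p i \<noteq> c" "p i \<noteq> Suc c" using assms by (metis injD)+
    then show ?thesis using False by (simp add: sigma_apply)
  qed
qed

lemma strong_exchange:
  assumes ab: "a < b" and inv: "word_perm x a > word_perm x b"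
  shows "\<exists>x'. subseq x' x \<and> word_perm x \<circ> Transposition.transpose a b = word_perm x'"
  using inv
proof (induction x)
  case Nil
  then show ?case using ab by simp
next
  case (Cons c y)
  let ?p = "word_perm y"
  let ?t = "Transposition.transpose a b"
  show ?case
  proof (cases "?p a > ?p b")
    case True
    then obtain y' where y': "subseq y' y" "?p \<circ> ?t = word_perm y'" using Cons.IH by blast
    then have "word_perm (c # y) \<circ> ?t = word_perm (c # y')"
      by (simp add: comp_assoc)
    moreover have "subseq (c # y') (c # y)" using y'(1) by simp
    ultimately show ?thesis by blast
  next
    case False
    have "?p a \<noteq> ?p b" using inj_word_perm[of y] ab by (metis injD less_irrefl)
    then have "?p a < ?p b" using False by simp
    moreover have "sigma c (?p a) > sigma c (?p b)" using Cons.prems by simp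
    ultimately have "?p a = c" "?p b = Suc c" using sigma_flips_only_adjacent by auto
    then have "word_perm (c # y) \<circ> ?t = ?p"
      using sigma_comp_transpose_cancel[OF inj_word_perm] by simp
    moreover have "subseq y (c # y)" by (simp add: list_emb_Cons)
    ultimately show ?thesis by blast
  qed
qed

lemma bruhat_le_word_perm_imp_subword:
  assumes "bruhat_le n q (word_perm x)"
  shows "\<exists>x'. subseq x' x \<and> q = word_perm x'"
proof -
  from assms have "(q, word_perm x) \<in> (bruhat_step n)\<^sup>*" by (simp add: bruhat_le_def)
  then show ?thesis
  proof (induction rule: converse_rtrancl_induct)
    case base
    then show ?case by blast
  next
    case (step y z)
    from step.IH obtain x' where x': "subseq x' x" "z = word_perm x'" by blast
    from step.hyps(1) obtain a b where ab: "a < b" "a \<in> {1..n}" "b \<in> {1..n}" "y a < y b"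
      and z: "z = y \<circ> Transposition.transpose a b"
      by (rule bruhat_stepE)
    have y: "y = word_perm x' \<circ> Transposition.transpose a b"
      using z x'(2) by (simp add: comp_assoc)
    then have "word_perm x' a > word_perm x' b"
      using ab(4) by simp
    then obtain x'' where "subseq x'' x'" "y = word_perm x''"
      using strong_exchange[OF ab(1)] y by blast
    then show ?case using x'(1) by (blast intro: subseq_order.trans)
  qed
qed

lemma inj_on_word_perm_subwords:
  assumes "distinct s" "set s \<subseteq> {1..<n}"
  shows "inj_on word_perm {x. subseq x s}"
proof (rule inj_onI)
  fix x y assume "x \<in> {x. subseq x s}" "y \<in> {x. subseq x s}" "word_perm x = word_perm y"
  moreover have "bruhat_le n (word_perm x) (word_perm x)"
    using subword_permutes[OF assms(2)] \<open>x \<in> {x. subseq x s}\<close> by (simp add: bruhat_le_refl)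
  ultimately show "x = y"
    using bruhat_le_subword_iff[OF assms] by (metis mem_Collect_eq subseq_order.antisym)
qed

lemma bruhat_interval_word_perm:
  assumes "distinct s" "set s \<subseteq> {1..<n}"
  shows "bruhat_interval n (word_perm s) = word_perm ` {x. subseq x s}"
  using bruhat_le_word_perm_imp_subword bruhat_le_subword_iff[OF assms _ subseq_order.refl]
  unfolding bruhat_interval_def by blast

section \<open>Minimal runs not below w\<close>

text \<open>\<open>R i j\<close> stands for the run on the letters \<open>i..i+j\<close>; for \<open>j = Suc j''\<close> the words
  \<open>R i j''\<close> and \<open>R (Suc i) j''\<close> are obtained from it by dropping one end letter.\<close>

lemma exists_minimal_bad_segment:
  fixes R :: "nat \<Rightarrow> nat \<Rightarrow> 'a list"
  assumes grow_right: "\<And>i j. subseq (R i j) (R i (Suc j))"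
    and grow_left: "\<And>i j. subseq (R (Suc i) j) (R i (Suc j))"
    and "bad (R i j)"
  shows "\<exists>i' j'. subseq (R i' j') (R i j) \<and> bad (R i' j')
    \<and> (\<forall>j''. j' = Suc j'' \<longrightarrow> \<not> bad (R i' j'') \<and> \<not> bad (R (Suc i') j''))"
  using assms(3)
proof (induction j arbitrary: i)
  case 0
  then show ?case by blast
next
  case (Suc j)
  show ?case
  proof (cases "bad (R i j) \<or> bad (R (Suc i) j)")
    case True
    then obtain i0 where "bad (R i0 j)" "subseq (R i0 j) (R i (Suc j))"
      using grow_right grow_left by blast
    then show ?thesis using Suc.IH by (blast intro: subseq_order.trans)
  next
    case False
    then show ?thesis using Suc.prems by blast
  qed
qed

lemma W_set_below_bad_ascending:
  assumes w: "w permutes {1..n}" and s: "subseq [i..<i+j+1] s"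
    and bad: "\<not> bruhat_le n (word_perm [i..<i+j+1]) w"
  shows "\<exists>u\<in>W_set n s w. subseq u [i..<i+j+1]"
proof -
  have "subseq [i..<i+j+1] [i..<i+Suc j+1]" for i j
    using subseq_rev_drop_many[OF subseq_order.refl, of "[i..<i+j+1]" "[i+j+1]"] by simp
  moreover have "subseq [Suc i..<Suc i+j+1] [i..<i+Suc j+1]" for i j
    by (simp add: upt_conv_Cons list_emb_Cons del: upt_Suc)
  ultimately obtain i' j' where sub: "subseq [i'..<i'+j'+1] [i..<i+j+1]"
    and bad': "\<not> bruhat_le n (word_perm [i'..<i'+j'+1]) w"
    and faces: "\<And>j''. j' = Suc j'' \<Longrightarrow> bruhat_le n (word_perm [i'..<i'+j''+1]) w
      \<and> bruhat_le n (word_perm [Suc i'..<Suc i'+j''+1]) w"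
    using exists_minimal_bad_segment[where R = "\<lambda>i j. [i..<i+j+1]"
        and bad = "\<lambda>u. \<not> bruhat_le n (word_perm u) w"] bad
    by blast
  have "[i'..<i'+j'+1] \<in> W_set n s w"
    unfolding W_set_def
    using subseq_order.trans[OF sub s] bad' faces id_bruhat_le[OF w]
    by (cases j') fastforce+
  with sub show ?thesis by blast
qed

lemma W_set_below_bad_descending:
  assumes w: "w permutes {1..n}" and s: "subseq (rev [i..<i+j+1]) s"
    and bad: "\<not> bruhat_le n (word_perm (rev [i..<i+j+1])) w"
  shows "\<exists>u\<in>W_set n s w. subseq u (rev [i..<i+j+1])"
proof -
  have "subseq (rev [i..<i+j+1]) (rev [i..<i+Suc j+1])" for i j
    by (simp add: list_emb_Cons)
  moreover have "subseq (rev [Suc i..<Suc i+j+1]) (rev [i..<i+Suc j+1])" for i j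
  proof -
    have "rev [i..<i+Suc j+1] = rev [Suc i..<Suc i+j+1] @ [i]"
      by (simp add: upt_conv_Cons del: upt_Suc)
    then show ?thesis using subseq_rev_drop_many[OF subseq_order.refl] by metis
  qed
  ultimately obtain i' j' where sub: "subseq (rev [i'..<i'+j'+1]) (rev [i..<i+j+1])"
    and bad': "\<not> bruhat_le n (word_perm (rev [i'..<i'+j'+1])) w"
    and faces: "\<And>j''. j' = Suc j'' \<Longrightarrow> bruhat_le n (word_perm (rev [i'..<i'+j''+1])) w
      \<and> bruhat_le n (word_perm (rev [Suc i'..<Suc i'+j''+1])) w"
    using exists_minimal_bad_segment[where R = "\<lambda>i j. rev [i..<i+j+1]"
        and bad = "\<lambda>u. \<not> bruhat_le n (word_perm u) w"] bad
    by blast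
  have "rev [i'..<i'+j'+1] \<in> W_set n s w"
    unfolding W_set_def
    using subseq_order.trans[OF sub s] bad' faces id_bruhat_le[OF w]
    by (cases j') fastforce+
  with sub show ?thesis by blast
qed

lemma W_set_below_bad_run:
  assumes w: "w permutes {1..n}" and s: "subseq (run k l) s"
    and bad: "\<not> bruhat_le n (word_perm (run k l)) w"
  shows "\<exists>u\<in>W_set n s w. subseq u (run k l)"
proof (cases "k < l")
  case True
  then have "run k l = rev [k..<k + (l - 1 - k) + 1]" by (simp add: run_def)
  then show ?thesis using W_set_below_bad_descending[OF w] s bad by simp
next
  case False
  then have "run k l = [l - 1..<(l - 1) + (k - (l - 1)) + 1]" by (simp add: run_def)
  then show ?thesis using W_set_below_bad_ascending[OF w] s bad by simp
qed

lemma bruhat_le_iff_avoids_W_set: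
  assumes s: "distinct s" "set s \<subseteq> {1..<n}" and x: "subseq x s" and w: "w permutes {1..n}"
  shows "bruhat_le n (word_perm x) w \<longleftrightarrow> (\<forall>u\<in>W_set n s w. \<not> subseq u x)"
proof
  assume le: "bruhat_le n (word_perm x) w"
  show "\<forall>u\<in>W_set n s w. \<not> subseq u x"
  proof (intro ballI notI)
    fix u assume u: "u \<in> W_set n s w" and "subseq u x"
    then have "bruhat_le n (word_perm u) (word_perm x)"
      using bruhat_le_subword_iff[OF s _ x] by (simp add: W_set_def)
    with le u show False
      unfolding W_set_def by (blast intro: bruhat_le_trans)
  qed
next
  assume avoids: "\<forall>u\<in>W_set n s w. \<not> subseq u x"
  show "bruhat_le n (word_perm x) w"
  proof (rule ccontr)
    assume "\<not> bruhat_le n (word_perm x) w"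
    then obtain k l where "rank_matrix w k l < rank_matrix (word_perm x) k l"
      using bruhat_le_iff_rank_matrix_le[OF subword_permutes[OF s(2) x] w] by (meson not_le)
    moreover have "k - (l - 1) \<le> rank_matrix w k l"
      using rank_matrix_id_le[OF w] by (simp add: rank_matrix_id)
    ultimately have run_x: "subseq (run k l) x" and tight: "rank_matrix w k l = k - (l - 1)"
      using rank_matrix_subword[OF s x, of k l] by (auto split: if_splits)
    have run_s: "subseq (run k l) s" using run_x x by (rule subseq_order.trans)
    have "\<not> bruhat_le n (word_perm (run k l)) w"
    proof
      assume "bruhat_le n (word_perm (run k l)) w"
      from bruhat_le_imp_rank_matrix_le[OF this, of k l] show False
        using tight rank_matrix_subword[OF s run_s, of k l] by simp
    qed
    then obtain u where "u \<in> W_set n s w" "subseq u (run k l)"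
      using W_set_below_bad_run[OF w run_s] by blast
    with run_x avoids show False by (blast intro: subseq_order.trans)
  qed
qed

theorem proposition3p7:
  fixes n :: nat and v w :: "nat \<Rightarrow> nat" and s :: "nat list"
  assumes "v permutes {1..n}" and "w permutes {1..n}"
    and "boolean_perm n v"
    and "reduced_word n s v"
  shows "word_perm ` W_up n s w
           = maximal_elems n (bruhat_interval n v \<inter> bruhat_interval n w)"
proof -
  have s: "distinct s" "set s \<subseteq> {1..<n}" and v: "v = word_perm s"
    using assms(3,4) by (auto simp: boolean_perm_def reduced_word_def valid_word_def)
  define A where "A = {x. subseq x s \<and> (\<forall>u \<in> W_set n s w. \<not> subseq u x)}"
  have A: "A = {x. subseq x s \<and> bruhat_le n (word_perm x) w}"
    unfolding A_def using bruhat_le_iff_avoids_W_set[OF s _ assms(2)] by blast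
  have embedding: "bruhat_le n (word_perm x) (word_perm y) \<longleftrightarrow> subseq x y" if "x \<in> A" "y \<in> A" for x y
    using that bruhat_le_subword_iff[OF s] by (simp add: A)
  have "inj_on word_perm A"
    using inj_on_word_perm_subwords[OF s] by (rule inj_on_subset) (auto simp: A)
  moreover have "bruhat_interval n v \<inter> bruhat_interval n w = word_perm ` A"
    using bruhat_interval_word_perm[OF s] by (auto simp: v A bruhat_interval_def)
  ultimately show ?thesis
    unfolding W_up_def maximal_elems_def Let_def A_def[symmetric]
    using embedding by (intro image_maximal_elements) auto
qed

end
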